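(* (Perfect ciphertext blindness of SymmetricBlind against the Decryptor.) In the probabilistic model described in the context, for all $m\in\mathbb{Z}_p$, $c'\in\mathbb{Z}_p$ and $m'\in\mathbb{Z}_p$ with $\Pr[C'=c'\cap M'=m']>0$, $$\Pr[M=m\mid C'=c'\cap M'=m']=\Pr[M=m].$$
   Context: Let $p\ge5$ be a prime; $\mathbb{Z}_n=\{0,\dots,n-1\}$ and $x\bmod n$ is the least nonnegative residue. 2PAD: key $(x_k,y_k)\in\mathbb{Z}_p^2$; encrypting $m\in\mathbb{Z}_p$ with randomness $z\in\mathbb{Z}_p\setminus\{0\}$ gives $c=(p x_k z^2+p y_k z+pm+z)\bmod p^2$; decrypting $c\in\mathbb{Z}_{p^2}$: $z=c\bmod p$, $t=(-p x_k z^2-p y_k z+c)\bmod p^2$, output $(t-z)/p$. Probabilistic model of the blind decryption in the scheme SymmetricBlind with $1\le L\le p-1$: the key $(X,Y)$ has $X,Y$ independent and uniform on $\mathbb{Z}_p$; $M_1,\dots,M_L$ are arbitrary jointly distributed random plaintexts in $\mathbb{Z}_p$; the encryption randomness $(z_1,\dots,z_L)$ consists of pairwise distinct elements of $\mathbb{Z}_p\setminus\{0\}$, each $z_j$ being (marginally) uniform on $\mathbb{Z}_p\setminus\{0\}$ (e.g. $(z_1,\dots,z_L)$ uniform over all tuples of distinct nonzero residues); $C_j$ is the 2PAD encryption of $M_j$ under $(X,Y)$ with randomness $z_j$; Alice's chosen index $I\in\{1,\dots,L\}$ is a random variable; and the three families $(X,Y)$, $(z_1,\dots,z_L)$, $(I,M_1,\dots,M_L)$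 are mutually independent. Alice sends $C'=C_I\bmod p$ to the Decryptor, who replies $M'=\mathrm{Dec}_{2PAD}(X,Y,C')$; Alice's output is $M=((C_I-C'+pM')\bmod p^2)/p$ (which equals $M_I$). (The ciphertexts $C_1,\dots,C_L$ are assumed hidden from the Decryptor.) *)

theory Defs
  imports "HOL-Probability.Probability" "HOL-Computational_Algebra.Primes"
begin

text \<open>2PAD encryption and decryption; residues are represented as integers
  (least nonnegative residues via \<open>mod\<close>).\<close>

definition enc2pad :: "int \<Rightarrow> int \<Rightarrow> int \<Rightarrow> int \<Rightarrow> int \<Rightarrow> int" where
  "enc2pad p xk yk z m = (p * xk * z^2 + p * yk * z + p * m + z) mod p^2"

definition dec2pad :: "int \<Rightarrow> int \<Rightarrow> int \<Rightarrow> int \<Rightarrow> int" where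
  "dec2pad p xk yk c =
     (let z = c mod p;
          t = (- p * xk * z^2 - p * yk * z + c) mod p^2
      in (t - z) div p)"

text \<open>Sample space: \<open>((X,Y),(zs,(I,Ms)))\<close>, where \<open>zs j\<close> is the encryption
  randomness and \<open>Ms j\<close> the plaintext of index \<open>j \<in> {1..L}\<close>.\<close>

type_synonym outcome = "(int \<times> int) \<times> ((nat \<Rightarrow> int) \<times> (nat \<times> (nat \<Rightarrow> int)))"

definition ctI :: "int \<Rightarrow> outcome \<Rightarrow> int" where
  "ctI p \<omega> = (case \<omega> of ((x, y), (zs, (i, ms))) \<Rightarrow> enc2pad p x y (zs i) (ms i))"

definition Cq :: "int \<Rightarrow> outcome \<Rightarrow> int" where
  "Cq p \<omega> = ctI p \<omega> mod p"

definition Mr :: "int \<Rightarrow> outcome \<Rightarrow> int" where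
  "Mr p \<omega> = (case \<omega> of ((x, y), _) \<Rightarrow> dec2pad p x y (Cq p \<omega>))"

definition Mout :: "int \<Rightarrow> outcome \<Rightarrow> int" where
  "Mout p \<omega> = ((ctI p \<omega> - Cq p \<omega> + p * Mr p \<omega>) mod p^2) div p"

end

theory Submission
  imports Defs
begin

text \<open>On every outcome in the support the query is the bare randomness \<open>C' = z\<^sub>I\<close>, the reply is
  \<open>-(X z\<^sub>I\<^sup>2 + Y z\<^sub>I) mod p\<close>, and Alice's output is \<open>M\<^sub>I\<close>.  Hence the view
  \<open>(C', M')\<close> of the Decryptor is a function of the key and of \<open>z\<^sub>I\<close> alone.  Because
  every coordinate of the randomness has the same law, \<open>z\<^sub>I\<close> is independent of
  \<open>(I, M\<^sub>1, \<dots>, M\<^sub>L)\<close> even though \<open>I\<close> selects the coordinate; so the view is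
  independent of \<open>M = M\<^sub>I\<close>.\<close>

lemma mod_power2_mult_add:
  fixes p a z :: int
  assumes "0 \<le> z" "z < p"
  shows "(p * a + z) mod p^2 = p * (a mod p) + z"
proof -
  define q r where "q = a div p" and "r = a mod p"
  have "p * r \<le> p * (p - 1)"
    using assms pos_mod_bound[of p a] by (intro mult_left_mono) (auto simp: r_def)
  then have bounds: "0 \<le> p * r + z" "p * r + z < p^2"
    using assms by (auto simp: r_def power2_eq_square algebra_simps)
  have "a = p * q + r"
    by (simp add: q_def r_def)
  then have "p * a + z = (p * r + z) + q * p^2"
    by (simp add: power2_eq_square algebra_simps)
  then have "(p * a + z) mod p^2 = (p * r + z) mod p^2"
    by (metis mod_mult_self1)
  also have "\<dots> = p * r + z"
    using bounds by simp
  finally show ?thesis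
    by (simp add: r_def)
qed

lemma enc2pad_eq:
  assumes "0 \<le> z" "z < p"
  shows "enc2pad p x y z m = p * ((x * z^2 + y * z + m) mod p) + z"
  using mod_power2_mult_add[OF assms, of "x * z^2 + y * z + m"]
  by (simp add: enc2pad_def algebra_simps)

definition decryptor_reply :: "int \<Rightarrow> int \<Rightarrow> int \<Rightarrow> int \<Rightarrow> int" where
  "decryptor_reply p x y z = (- (x * z^2 + y * z)) mod p"

lemma dec2pad_eq:
  assumes "0 \<le> z" "z < p"
  shows "dec2pad p x y z = decryptor_reply p x y z"
proof -
  have "- p * x * z^2 - p * y * z + z = p * (- (x * z^2 + y * z)) + z"
    by (simp add: algebra_simps)
  then show ?thesis
    using assms mod_power2_mult_add[OF assms, of "- (x * z^2 + y * z)"]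
    by (simp add: dec2pad_def decryptor_reply_def Let_def)
qed

context
  fixes p x y :: int and zs ms :: "nat \<Rightarrow> int" and i :: nat
  assumes z_range: "zs i \<in> {0..<p}"
begin

lemma Cq_eq: "Cq p ((x, y), (zs, (i, ms))) = zs i"
  using z_range by (simp add: Cq_def ctI_def enc2pad_eq)

lemma Mr_eq: "Mr p ((x, y), (zs, (i, ms))) = decryptor_reply p x y (zs i)"
  using z_range by (simp add: Mr_def Cq_eq dec2pad_eq)

lemma Mout_eq:
  assumes "ms i \<in> {0..<p}"
  shows "Mout p ((x, y), (zs, (i, ms))) = ms i"
proof -
  define k where "k = x * (zs i)^2 + y * zs i + ms i"
  define r where "r = - (x * (zs i)^2 + y * zs i)"
  have "ctI p ((x, y), (zs, (i, ms))) = p * (k mod p) + zs i"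
    using z_range by (simp add: ctI_def enc2pad_eq k_def)
  then have "ctI p ((x, y), (zs, (i, ms))) - Cq p ((x, y), (zs, (i, ms)))
          + p * Mr p ((x, y), (zs, (i, ms))) = p * (k mod p + r mod p) + 0"
    by (simp add: Cq_eq Mr_eq decryptor_reply_def r_def distrib_left)
  moreover have "(p * (k mod p + r mod p) + 0) mod p^2 = p * ((k mod p + r mod p) mod p) + 0"
    using z_range by (intro mod_power2_mult_add) auto
  moreover have "(k mod p + r mod p) mod p = ms i"
    using assms by (simp add: k_def r_def mod_add_eq)
  ultimately show ?thesis
    using z_range unfolding Mout_def by simp
qed

end

lemma map_pmf_select_coordinate:
  assumes "\<And>v. v \<in> set_pmf V \<Longrightarrow> map_pmf (\<lambda>zs. zs (idx v)) Z = Q"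
  shows "map_pmf (\<lambda>(zs, v). (zs (idx v), v)) (pair_pmf Z V) = pair_pmf Q V"
proof -
  have "map_pmf (\<lambda>(zs, v). (zs (idx v), v)) (pair_pmf Z V)
      = bind_pmf V (\<lambda>v. map_pmf (\<lambda>z. (z, v)) (map_pmf (\<lambda>zs. zs (idx v)) Z))"
    unfolding pair_pmf_def
    by (subst bind_commute_pmf) (simp add: map_bind_pmf map_pmf_comp map_pmf_def[symmetric])
  also have "\<dots> = bind_pmf V (\<lambda>v. map_pmf (\<lambda>z. (z, v)) Q)"
    using assms by (intro bind_pmf_cong) simp_all
  also have "\<dots> = pair_pmf Q V"
    unfolding pair_pmf_def by (subst bind_commute_pmf) (simp add: map_pmf_def)
  finally show ?thesis .
qed

lemma measure_pair_pmf_Times: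
  "measure_pmf.prob (pair_pmf M N) (A \<times> B) = measure_pmf.prob M A * measure_pmf.prob N B"
proof -
  have "measure_pmf.prob (pair_pmf M N) (A \<times> B)
      = measure_pmf.prob (pair_pmf M N) ((A \<inter> set_pmf M) \<times> (B \<inter> set_pmf N))"
    by (metis (no_types) Times_Int_Times measure_Int_set_pmf set_pair_pmf)
  also have "\<dots> = measure_pmf.prob M (A \<inter> set_pmf M) * measure_pmf.prob N (B \<inter> set_pmf N)"
    by (intro measure_pmf_prob_product) (auto intro: countable_subset)
  finally show ?thesis
    by (simp add: measure_Int_set_pmf)
qed

definition select_randomness :: "outcome \<Rightarrow> (int \<times> int) \<times> int \<times> nat \<times> (nat \<Rightarrow> int)" where
  "select_randomness = (\<lambda>(k, zs, i, ms). (k, zs i, i, ms))"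

lemma map_pmf_select_randomness:
  assumes "\<And>i ms. (i, ms) \<in> set_pmf IM \<Longrightarrow> map_pmf (\<lambda>zs. zs i) Z = Q"
  shows "map_pmf select_randomness (pair_pmf K (pair_pmf Z IM)) = pair_pmf K (pair_pmf Q IM)"
proof -
  have decomposed: "select_randomness = (\<lambda>(k, w). (id k, (\<lambda>(zs, v). (zs (fst v), v)) w))"
    by (auto simp: select_randomness_def)
  have "map_pmf select_randomness (pair_pmf K (pair_pmf Z IM))
      = pair_pmf (map_pmf id K) (map_pmf (\<lambda>(zs, v). (zs (fst v), v)) (pair_pmf Z IM))"
    unfolding decomposed by (rule map_pair)
  also have "map_pmf (\<lambda>(zs, v). (zs (fst v), v)) (pair_pmf Z IM) = pair_pmf Q IM"
    using assms by (intro map_pmf_select_coordinate) (metis prod.collapse)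
  finally show ?thesis
    by simp
qed

locale blind_protocol =
  fixes p :: int and Z :: "(nat \<Rightarrow> int) pmf" and IM :: "(nat \<times> (nat \<Rightarrow> int)) pmf"
    and Q :: "int pmf"
  assumes z_range: "\<And>zs i ms. zs \<in> set_pmf Z \<Longrightarrow> (i, ms) \<in> set_pmf IM \<Longrightarrow> zs i \<in> {0..<p}"
    and m_range: "\<And>i ms. (i, ms) \<in> set_pmf IM \<Longrightarrow> ms i \<in> {0..<p}"
    and selection: "\<And>i ms. (i, ms) \<in> set_pmf IM \<Longrightarrow> map_pmf (\<lambda>zs. zs i) Z = Q"
begin

lemma prob_protocol_event:
  "measure_pmf.prob (pair_pmf K (pair_pmf Z IM)) {\<omega>. P (Cq p \<omega>) (Mr p \<omega>) (Mout p \<omega>)}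
     = measure_pmf.prob (pair_pmf K (pair_pmf Q IM))
         {((x, y), z, i, ms). P z (decryptor_reply p x y z) (ms i)}"
    (is "measure_pmf.prob ?\<Omega> ?E = measure_pmf.prob _ ?S")
proof -
  have "\<omega> \<in> ?E \<longleftrightarrow> \<omega> \<in> select_randomness -` ?S" if "\<omega> \<in> set_pmf ?\<Omega>" for \<omega>
  proof -
    obtain x y zs i ms where \<omega>: "\<omega> = ((x, y), zs, i, ms)"
      by (metis prod.collapse)
    have "zs i \<in> {0..<p}" "ms i \<in> {0..<p}"
      using that z_range m_range by (auto simp: \<omega>)
    then show ?thesis
      by (simp add: \<omega> select_randomness_def Cq_eq Mr_eq Mout_eq)
  qed
  then have "measure_pmf.prob ?\<Omega> ?E = measure_pmf.prob ?\<Omega> (select_randomness -` ?S)"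
    by (intro measure_prob_cong_0) (simp_all only: pmf_eq_0_set_pmf, blast+)
  also have "\<dots> = measure_pmf.prob (map_pmf select_randomness ?\<Omega>) ?S"
    by (rule measure_map_pmf[symmetric])
  also have "map_pmf select_randomness ?\<Omega> = pair_pmf K (pair_pmf Q IM)"
    using selection by (rule map_pmf_select_randomness)
  finally show ?thesis .
qed

lemma prob_query_event:
  "measure_pmf.prob (pair_pmf K (pair_pmf Z IM)) {\<omega>. Cq p \<omega> = c \<and> Mr p \<omega> \<in> R \<and> Mout p \<omega> \<in> S}
     = measure_pmf.prob K {(x, y). decryptor_reply p x y c \<in> R} * measure_pmf.prob Q {c}
         * measure_pmf.prob IM {(i, ms). ms i \<in> S}"
proof -
  have event: "{((x, y), z, i, ms). z = c \<and> decryptor_reply p x y z \<in> R \<and> ms i \<in> S}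
      = {(x, y). decryptor_reply p x y c \<in> R} \<times> ({c} \<times> {(i, ms). ms i \<in> S})"
    by auto
  show ?thesis
    using prob_protocol_event[of K "\<lambda>z r out. z = c \<and> r \<in> R \<and> out \<in> S"]
    unfolding event measure_pair_pmf_Times by (simp add: mult.assoc)
qed

lemma prob_output_event:
  "measure_pmf.prob (pair_pmf K (pair_pmf Z IM)) {\<omega>. Mout p \<omega> \<in> S}
     = measure_pmf.prob IM {(i, ms). ms i \<in> S}"
proof -
  have event: "{((x, y), z, i, ms). ms i \<in> S} = UNIV \<times> (UNIV \<times> {(i, ms). ms i \<in> S})"
    by auto
  show ?thesis
    using prob_protocol_event[of K "\<lambda>z r out. out \<in> S"]
    unfolding event measure_pair_pmf_Times by simp
qed

end

theorem proposition3:
  fixes p :: int and L :: nat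
    and Z :: "(nat \<Rightarrow> int) pmf"
    and IM :: "(nat \<times> (nat \<Rightarrow> int)) pmf"
    and m c' m' :: int
  assumes "prime p" and "p \<ge> 5"
    and "1 \<le> L" and "int L \<le> p - 1"
    and Z_distinct: "\<And>zs. zs \<in> set_pmf Z \<Longrightarrow> inj_on zs {1..L}"
    and Z_nonzero: "\<And>zs j. zs \<in> set_pmf Z \<Longrightarrow> j \<in> {1..L} \<Longrightarrow> zs j \<in> {1..<p}"
    and Z_uniform: "\<And>j. j \<in> {1..L} \<Longrightarrow> map_pmf (\<lambda>zs. zs j) Z = pmf_of_set {1..<p}"
    and IM_range: "\<And>i ms. (i, ms) \<in> set_pmf IM \<Longrightarrow>
                     i \<in> {1..L} \<and> (\<forall>j\<in>{1..L}. ms j \<in> {0..<p})"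
    and "m \<in> {0..<p}" and "c' \<in> {0..<p}" and "m' \<in> {0..<p}"
  defines "\<Omega> \<equiv> pair_pmf (pmf_of_set ({0..<p} \<times> {0..<p})) (pair_pmf Z IM)"
  assumes pos: "measure_pmf.prob \<Omega> {\<omega>. Cq p \<omega> = c' \<and> Mr p \<omega> = m'} > 0"
  shows "measure_pmf.prob \<Omega> {\<omega>. Mout p \<omega> = m \<and> Cq p \<omega> = c' \<and> Mr p \<omega> = m'}
           / measure_pmf.prob \<Omega> {\<omega>. Cq p \<omega> = c' \<and> Mr p \<omega> = m'}
         = measure_pmf.prob \<Omega> {\<omega>. Mout p \<omega> = m}"
proof -
  interpret blind_protocol p Z IM "pmf_of_set {1..<p}"
    using Z_nonzero Z_uniform IM_range by unfold_locales fastforce+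
  have events: "{\<omega>. Mout p \<omega> = m \<and> Cq p \<omega> = c' \<and> Mr p \<omega> = m'}
      = {\<omega>. Cq p \<omega> = c' \<and> Mr p \<omega> \<in> {m'} \<and> Mout p \<omega> \<in> {m}}"
    "{\<omega>. Cq p \<omega> = c' \<and> Mr p \<omega> = m'} = {\<omega>. Cq p \<omega> = c' \<and> Mr p \<omega> \<in> {m'} \<and> Mout p \<omega> \<in> UNIV}"
    "{\<omega>. Mout p \<omega> = m} = {\<omega>. Mout p \<omega> \<in> {m}}"
    by auto
  show ?thesis
    using pos unfolding \<Omega>_def events prob_query_event prob_output_event
    by (auto simp: zero_less_mult_iff)
qed

end
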